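(* Suppose a node $v$ of degree at least $3$ is deleted from a network and the healing responds by adding new edges (not previously present) only between former neighbors of $v$ such that the added edges form a connected graph on the set of former neighbors of $v$. Then, however the healing edges are chosen, at least one node has degree after the deletion and healing at least $1$ larger than its degree before the deletion.
   Context: Networks are undirected graphs; deleting a node removes it and all its incident edges. *)

theory Defs
  imports Main
begin

definition simple_graph :: "'a set \<Rightarrow> ('a \<Rightarrow> 'a \<Rightarrow> bool) \<Rightarrow> bool" where
  "simple_graph V E \<longleftrightarrow> finite V \<and> (\<forall>x y. E x y \<longrightarrow> x \<in> V \<and> y \<in> V)
     \<and> (\<forall>x y. E x y \<longrightarrow> E y x) \<and> (\<forall>x. \<not> E x x)"

definition nbrs :: "('a \<Rightarrow> 'a \<Rightarrow> bool) \<Rightarrow> 'a \<Rightarrow> 'a set" where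
  "nbrs E x = {y. E x y}"

definition degree :: "('a \<Rightarrow> 'a \<Rightarrow> bool) \<Rightarrow> 'a \<Rightarrow> nat" where
  "degree E x = card (nbrs E x)"

definition healed :: "('a \<Rightarrow> 'a \<Rightarrow> bool) \<Rightarrow> 'a \<Rightarrow> ('a \<Rightarrow> 'a \<Rightarrow> bool) \<Rightarrow> 'a \<Rightarrow> 'a \<Rightarrow> bool" where
  "healed E v H x y \<longleftrightarrow> (x \<noteq> v \<and> y \<noteq> v \<and> E x y) \<or> H x y"

definition valid_healing :: "('a \<Rightarrow> 'a \<Rightarrow> bool) \<Rightarrow> 'a \<Rightarrow> ('a \<Rightarrow> 'a \<Rightarrow> bool) \<Rightarrow> bool" where
  "valid_healing E v H \<longleftrightarrow>
     (\<forall>x y. H x y \<longrightarrow> x \<in> nbrs E v \<and> y \<in> nbrs E v \<and> \<not> E x y)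
     \<and> (\<forall>x y. H x y \<longrightarrow> H y x) \<and> (\<forall>x. \<not> H x x)
     \<and> (\<forall>x\<in>nbrs E v. \<forall>y\<in>nbrs E v. H\<^sup>*\<^sup>* x y)"

end

theory Submission
  imports Defs
begin

text \<open>A connected graph on at least three vertices has a vertex with two distinct neighbours;
  healing edges at such a vertex u replace the single lost edge uv by two new ones, so the
  degree of u increases.\<close>

lemma rtranclp_closed_pair:
  assumes "H\<^sup>*\<^sup>* a y" and "\<And>x. H a x \<Longrightarrow> x = b" and "\<And>x. H b x \<Longrightarrow> x = a"
  shows "y \<in> {a, b}"
  using assms(1) by (induction rule: rtranclp_induct) (auto dest: assms(2,3))

lemma connected_card_ge_3_imp_branch:
  assumes sym: "\<And>x y. H x y \<Longrightarrow> H y x"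
    and conn: "\<forall>x\<in>S. \<forall>y\<in>S. H\<^sup>*\<^sup>* x y"
    and card: "card S \<ge> 3"
  shows "\<exists>u y z. H u y \<and> H u z \<and> y \<noteq> z"
proof (rule ccontr)
  assume "\<not> ?thesis"
  then have unique: "\<And>u y z. H u y \<Longrightarrow> H u z \<Longrightarrow> y = z" by blast
  obtain T where "T \<subseteq> S" "card T = 3"
    using card by (meson obtain_subset_with_card_n)
  then obtain a c d where acd: "a \<in> S" "c \<in> S" "d \<in> S" "a \<noteq> c" "a \<noteq> d" "c \<noteq> d"
    unfolding card_3_iff by blast
  then have "H\<^sup>*\<^sup>* a c" "H\<^sup>*\<^sup>* a d" using conn by blast+
  then obtain b where "H a b"
    using acd(4) by (metis converse_rtranclpE)
  then have "\<And>x. H a x \<Longrightarrow> x = b" "\<And>x. H b x \<Longrightarrow> x = a"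
    using unique sym by blast+
  then have "c \<in> {a, b}" "d \<in> {a, b}"
    using rtranclp_closed_pair[OF \<open>H\<^sup>*\<^sup>* a c\<close>] rtranclp_closed_pair[OF \<open>H\<^sup>*\<^sup>* a d\<close>] by blast+
  with acd show False by auto
qed

lemma finite_nbrs_healed:
  assumes "simple_graph V E" and "\<And>x y. H x y \<Longrightarrow> x \<in> nbrs E v \<and> y \<in> nbrs E v"
  shows "finite (nbrs (healed E v H) u)"
proof (rule finite_subset)
  show "nbrs (healed E v H) u \<subseteq> V"
    using assms by (fastforce simp: simple_graph_def nbrs_def healed_def)
  show "finite V" using assms(1) by (simp add: simple_graph_def)
qed

lemma degree_healed_ge_Suc:
  assumes G: "simple_graph V E"
    and H_nbrs: "\<And>x y. H x y \<Longrightarrow> x \<in> nbrs E v \<and> y \<in> nbrs E v \<and> \<not> E x y"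
    and "E v u" and "H u y" "H u z" "y \<noteq> z"
  shows "degree (healed E v H) u \<ge> degree E u + 1"
proof -
  have "E u v" "u \<noteq> v" using G \<open>E v u\<close> unfolding simple_graph_def by blast+
  have "nbrs E u \<subseteq> V" using G unfolding simple_graph_def nbrs_def by blast
  then have fin: "finite (nbrs E u)"
    using G finite_subset unfolding simple_graph_def by blast
  let ?A = "nbrs E u - {v}"
  have card_A: "card ?A + 1 = degree E u"
    using card_Suc_Diff1[OF fin, of v] \<open>E u v\<close> by (simp add: degree_def nbrs_def)
  have "?A \<inter> {y, z} = {}" using H_nbrs \<open>H u y\<close> \<open>H u z\<close> by (auto simp: nbrs_def)
  then have "card ?A + 2 = card (?A \<union> {y, z})"
    using card_Un_disjoint[of ?A "{y, z}"] fin \<open>y \<noteq> z\<close> by simp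
  also have "\<dots> \<le> degree (healed E v H) u"
    unfolding degree_def
  proof (rule card_mono)
    show "finite (nbrs (healed E v H) u)"
      using finite_nbrs_healed[OF G] H_nbrs by metis
    show "?A \<union> {y, z} \<subseteq> nbrs (healed E v H) u"
      using \<open>H u y\<close> \<open>H u z\<close> \<open>u \<noteq> v\<close> by (auto simp: nbrs_def healed_def)
  qed
  finally show ?thesis using card_A by simp
qed

theorem lemma11:
  fixes V :: "'a set" and E H :: "'a \<Rightarrow> 'a \<Rightarrow> bool" and v :: 'a
  assumes "simple_graph V E"
    and "v \<in> V"
    and "degree E v \<ge> 3"
    and "valid_healing E v H"
  shows "\<exists>u \<in> V - {v}. degree (healed E v H) u \<ge> degree E u + 1"
proof -
  have H_nbrs: "\<And>x y. H x y \<Longrightarrow> x \<in> nbrs E v \<and> y \<in> nbrs E v \<and> \<not> E x y"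
    and "\<And>x y. H x y \<Longrightarrow> H y x"
    and "\<forall>x\<in>nbrs E v. \<forall>y\<in>nbrs E v. H\<^sup>*\<^sup>* x y"
    using assms(4) by (auto simp: valid_healing_def)
  moreover have "card (nbrs E v) \<ge> 3" using assms(3) by (simp add: degree_def)
  ultimately obtain u y z where "H u y" "H u z" "y \<noteq> z"
    using connected_card_ge_3_imp_branch[of H "nbrs E v"] by blast
  moreover have "E v u" using H_nbrs \<open>H u y\<close> by (simp add: nbrs_def)
  then have "u \<in> V - {v}" using assms(1) by (auto simp: simple_graph_def)
  ultimately show ?thesis
    using degree_healed_ge_Suc[OF assms(1) H_nbrs \<open>E v u\<close>] by blast
qed

end
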